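(* Let $\phi=\tilde p/p$ be an irreducible rational inner function on $\mathbb{D}^3$ of degree $(m,n,1)$ with $p(z)=p_1(z_1,z_2)+z_3p_2(z_1,z_2)$, $\tilde p(z)=z_3\tilde p_1(z_1,z_2)+\tilde p_2(z_1,z_2)$. Assume $\tau=(\tau_1,\tau_2,\tau_3)\in\mathcal{Z}_p\cap\mathbb{T}^3$ and that the vertical line $\{(\tau_1,\tau_2)\}\times\mathbb{T}$ is not a component of $\mathcal{Z}_p$. Then $\phi^*(\tau)=\frac{\tilde p_2(\tau_1,\tau_2)}{p_1(\tau_1,\tau_2)}$, where $\phi^*(\tau)$ denotes the nontangential limit of $\phi$ at $\tau$.
   Context: A rational inner function (RIF) on $\mathbb{D}^3$ is a rational function holomorphic on the tridisk with unimodular radial limits a.e. on $\mathbb{T}^3$; it is written $\phi=\tilde p/p$ with $p$ zero-free on $\mathbb{D}^3$, $p,\tilde p$ without common factors. For degree $(m,n,1)$, $\tilde p(z)=z_1^mz_2^nz_3\overline{p(1/\bar z_1,1/\bar z_2,1/\bar z_3)}$ and $\tilde p_j(z_1,z_2)=z_1^mz_2^n\overline{p_j(1/\bar z_1,1/\bar z_2)}$. The nontangential limit at $\tau\in\mathbb{T}^3$ is the limit as $z\to\tau$ in $\mathbb{D}^3$ with $\|z-\tau\|\le C(1-\|z\|)$; it exists at every $\tau\in\mathbb{T}^3$ for every RIF. $\mathcal{Z}_p$ is the zero set of $p$. *)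

theory Defs
  imports "HOL-Analysis.Analysis"
begin

type_synonym c3 = "complex \<times> complex \<times> complex"

definition D3 :: "c3 set" where
  "D3 = {(a, b, c). norm a < 1 \<and> norm b < 1 \<and> norm c < 1}"

definition T3 :: "c3 set" where
  "T3 = {(a, b, c). norm a = 1 \<and> norm b = 1 \<and> norm c = 1}"

definition nmax :: "c3 \<Rightarrow> real" where
  "nmax z = (case z of (a, b, c) \<Rightarrow> max (norm a) (max (norm b) (norm c)))"

definition dmax :: "c3 \<Rightarrow> c3 \<Rightarrow> real" where
  "dmax z w = (case z of (a, b, c) \<Rightarrow> case w of (a', b', c') \<Rightarrow>
      max (norm (a - a')) (max (norm (b - b')) (norm (c - c'))))"

definition polyval3 :: "(nat \<Rightarrow> nat \<Rightarrow> nat \<Rightarrow> complex) \<Rightarrow> nat \<Rightarrow> nat \<Rightarrow> nat \<Rightarrow> c3 \<Rightarrow> complex" where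
  "polyval3 c m n l z = (case z of (z1, z2, z3) \<Rightarrow>
     (\<Sum>i\<le>m. \<Sum>j\<le>n. \<Sum>k\<le>l. c i j k * z1 ^ i * z2 ^ j * z3 ^ k))"

definition polyval2 :: "(nat \<Rightarrow> nat \<Rightarrow> complex) \<Rightarrow> nat \<Rightarrow> nat \<Rightarrow> complex \<Rightarrow> complex \<Rightarrow> complex" where
  "polyval2 c m n z1 z2 = (\<Sum>i\<le>m. \<Sum>j\<le>n. c i j * z1 ^ i * z2 ^ j)"

text \<open>Reflection z^(m,n,l) conj(p(1/conj z)), written on coefficients.\<close>
definition refl3 :: "(nat \<Rightarrow> nat \<Rightarrow> nat \<Rightarrow> complex) \<Rightarrow> nat \<Rightarrow> nat \<Rightarrow> nat \<Rightarrow> nat \<Rightarrow> nat \<Rightarrow> nat \<Rightarrow> complex" where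
  "refl3 c m n l i j k = cnj (c (m - i) (n - j) (l - k))"

definition refl2 :: "(nat \<Rightarrow> nat \<Rightarrow> complex) \<Rightarrow> nat \<Rightarrow> nat \<Rightarrow> nat \<Rightarrow> nat \<Rightarrow> complex" where
  "refl2 c m n i j = cnj (c (m - i) (n - j))"

definition is_poly3 :: "(c3 \<Rightarrow> complex) \<Rightarrow> bool" where
  "is_poly3 f \<longleftrightarrow> (\<exists>N c. \<forall>z. f z = polyval3 c N N N z)"

definition nonconst3 :: "(c3 \<Rightarrow> complex) \<Rightarrow> bool" where
  "nonconst3 f \<longleftrightarrow> \<not> (\<exists>a. \<forall>z. f z = a)"

definition poly3_dvd :: "(c3 \<Rightarrow> complex) \<Rightarrow> (c3 \<Rightarrow> complex) \<Rightarrow> bool" where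
  "poly3_dvd q f \<longleftrightarrow> (\<exists>r. is_poly3 r \<and> (\<forall>z. f z = q z * r z))"

definition irreducible3 :: "(c3 \<Rightarrow> complex) \<Rightarrow> bool" where
  "irreducible3 f \<longleftrightarrow> is_poly3 f \<and> nonconst3 f \<and>
     (\<forall>q r. is_poly3 q \<and> is_poly3 r \<and> (\<forall>z. f z = q z * r z) \<longrightarrow>
        \<not> nonconst3 q \<or> \<not> nonconst3 r)"

definition no_common_factor3 :: "(c3 \<Rightarrow> complex) \<Rightarrow> (c3 \<Rightarrow> complex) \<Rightarrow> bool" where
  "no_common_factor3 f g \<longleftrightarrow>
     (\<forall>q. is_poly3 q \<and> poly3_dvd q f \<and> poly3_dvd q g \<longrightarrow> \<not> nonconst3 q)"

definition radial_unimodular_ae :: "(c3 \<Rightarrow> complex) \<Rightarrow> bool" where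
  "radial_unimodular_ae f \<longleftrightarrow>
     (AE \<theta> in (lborel :: (real \<times> real \<times> real) measure).
        \<exists>L. ((\<lambda>r::real. f (of_real r * cis (fst \<theta>), of_real r * cis (fst (snd \<theta>)),
                            of_real r * cis (snd (snd \<theta>)))) \<longlongrightarrow> L) (at_left 1)
            \<and> norm L = 1)"

definition has_nt_limit :: "(c3 \<Rightarrow> complex) \<Rightarrow> c3 \<Rightarrow> complex \<Rightarrow> bool" where
  "has_nt_limit f \<tau> L \<longleftrightarrow>
     (\<forall>C>0. (f \<longlongrightarrow> L) (at \<tau> within {z \<in> D3. dmax z \<tau> \<le> C * (1 - nmax z)}))"

end

theory Submission
  imports Defs
begin

(* Write p = p1 + z3 p2 and pt = z3 pt1 + pt2, so that
   pt/p - pt2/p1 = z3 D / (p1 p)  with the defect  D = pt1 p1 - pt2 p2.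
   Zero-freeness of p on the tridisk gives |p2| <= |p1| on the closed bidisk, hence
   |p(z)| >= (1 - |z3|) |p1(z1,z2)|, and on T^2 the function D conj(z1^m z2^n) equals
   |p1|^2 - |p2|^2 >= 0.  At tau this minimum value 0 is attained, because p(tau) = 0 forces
   |p1| = |p2| there, and p1(tau1,tau2) <> 0 because the vertical line is not in Z_p.
   A nonnegative function on the torus vanishing at a point has vanishing first-order terms
   there, so D(z) = o(|z1 - tau1| + |z2 - tau2|).  In a nontangential approach region both
   distances are O(1 - |z|), which absorbs the factor 1/(1 - |z3|) coming from 1/p. *)

lemma polyval3_affine_last:
  "polyval3 c m n 1 (x, y, w) =
     polyval2 (\<lambda>i j. c i j 0) m n x y + w * polyval2 (\<lambda>i j. c i j 1) m n x y"
  unfolding polyval3_def polyval2_def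
  by (simp add: atMost_Suc sum.distrib sum_distrib_left algebra_simps)

lemma polyval3_refl3_affine_last:
  "polyval3 (refl3 c m n 1) m n 1 (x, y, w) =
     w * polyval2 (refl2 (\<lambda>i j. c i j 0) m n) m n x y + polyval2 (refl2 (\<lambda>i j. c i j 1) m n) m n x y"
  unfolding polyval3_def polyval2_def refl3_def refl2_def
  by (simp add: atMost_Suc sum.distrib sum_distrib_left algebra_simps)

lemma sum_atMost_reflect: "(\<Sum>i\<le>m. f (m - i)) = (\<Sum>i\<le>(m::nat). f i)"
  using sum.atLeastAtMost_rev[of f 0 m] by (simp add: atLeast0AtMost)

lemma unimodular_power_le:
  assumes "norm (x::complex) = 1" "i \<le> m"
  shows "x ^ i = x ^ m * cnj x ^ (m - i)"
proof -
  have "x * cnj x = 1"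
    using assms(1) complex_norm_square[of x] by simp
  then have "x ^ (m - i) * cnj x ^ (m - i) = 1"
    by (simp add: power_mult_distrib[symmetric])
  moreover have "x ^ m = x ^ i * x ^ (m - i)"
    using assms(2) by (simp add: power_add[symmetric])
  ultimately show ?thesis by (simp add: mult.assoc)
qed

lemma polyval2_refl2_on_torus:
  assumes "norm x = 1" "norm y = 1"
  shows "polyval2 (refl2 a m n) m n x y = x ^ m * y ^ n * cnj (polyval2 a m n x y)"
proof -
  have "polyval2 (refl2 a m n) m n x y =
      x ^ m * y ^ n * (\<Sum>i\<le>m. \<Sum>j\<le>n. cnj (a (m - i) (n - j) * x ^ (m - i) * y ^ (n - j)))"
    unfolding polyval2_def refl2_def sum_distrib_left
    by (intro sum.cong refl)
      (simp add: unimodular_power_le[OF assms(1)] unimodular_power_le[OF assms(2)] mult_ac)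
  also have "\<dots> = x ^ m * y ^ n * (\<Sum>i\<le>m. \<Sum>j\<le>n. cnj (a i j * x ^ i * y ^ j))"
    using sum_atMost_reflect[of "\<lambda>i. \<Sum>j\<le>n. cnj (a i j * x ^ i * y ^ j)" m]
    by (simp only: sum_atMost_reflect[where f = "\<lambda>j. cnj (a _ j * _ * y ^ j)"])
  also have "\<dots> = x ^ m * y ^ n * cnj (polyval2 a m n x y)"
    by (simp add: polyval2_def)
  finally show ?thesis .
qed

definition dq_fst ::
    "(nat \<Rightarrow> nat \<Rightarrow> complex) \<Rightarrow> nat \<Rightarrow> nat \<Rightarrow> complex \<Rightarrow> complex \<Rightarrow> complex \<Rightarrow> complex"
  where "dq_fst a m n t x y = (\<Sum>i\<le>m. \<Sum>j\<le>n. a i j * (\<Sum>k<i. t ^ (i - Suc k) * x ^ k) * y ^ j)"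

definition dq_snd ::
    "(nat \<Rightarrow> nat \<Rightarrow> complex) \<Rightarrow> nat \<Rightarrow> nat \<Rightarrow> complex \<Rightarrow> complex \<Rightarrow> complex \<Rightarrow> complex"
  where "dq_snd a m n u x y = (\<Sum>i\<le>m. \<Sum>j\<le>n. a i j * x ^ i * (\<Sum>k<j. u ^ (j - Suc k) * y ^ k))"

lemma polyval2_diff_fst: "polyval2 a m n x y - polyval2 a m n t y = (x - t) * dq_fst a m n t x y"
proof -
  have "polyval2 a m n x y - polyval2 a m n t y = (\<Sum>i\<le>m. \<Sum>j\<le>n. a i j * (x ^ i - t ^ i) * y ^ j)"
    unfolding polyval2_def by (simp add: sum_subtractf[symmetric] algebra_simps)
  also have "\<dots> = (\<Sum>i\<le>m. \<Sum>j\<le>n. (x - t) * (a i j * (\<Sum>k<i. t ^ (i - Suc k) * x ^ k) * y ^ j))"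
    by (intro sum.cong refl) (simp only: power_diff_sumr2 mult_ac)
  also have "\<dots> = (x - t) * dq_fst a m n t x y"
    unfolding dq_fst_def by (simp only: sum_distrib_left)
  finally show ?thesis .
qed

lemma polyval2_diff_snd: "polyval2 a m n x y - polyval2 a m n x u = (y - u) * dq_snd a m n u x y"
proof -
  have "polyval2 a m n x y - polyval2 a m n x u = (\<Sum>i\<le>m. \<Sum>j\<le>n. a i j * x ^ i * (y ^ j - u ^ j))"
    unfolding polyval2_def by (simp add: sum_subtractf[symmetric] algebra_simps)
  also have "\<dots> = (\<Sum>i\<le>m. \<Sum>j\<le>n. (y - u) * (a i j * x ^ i * (\<Sum>k<j. u ^ (j - Suc k) * y ^ k)))"
    by (intro sum.cong refl) (simp only: power_diff_sumr2 mult_ac)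
  also have "\<dots> = (y - u) * dq_snd a m n u x y"
    unfolding dq_snd_def by (simp only: sum_distrib_left)
  finally show ?thesis .
qed

lemma tendsto_polyval2 [tendsto_intros]:
  "(f \<longlongrightarrow> x) F \<Longrightarrow> (g \<longlongrightarrow> y) F \<Longrightarrow>
    ((\<lambda>s. polyval2 a m n (f s) (g s)) \<longlongrightarrow> polyval2 a m n x y) F"
  unfolding polyval2_def by (intro tendsto_intros)

lemma tendsto_dq_fst [tendsto_intros]:
  "(f \<longlongrightarrow> x) F \<Longrightarrow> (g \<longlongrightarrow> y) F \<Longrightarrow>
    ((\<lambda>s. dq_fst a m n t (f s) (g s)) \<longlongrightarrow> dq_fst a m n t x y) F"
  unfolding dq_fst_def by (intro tendsto_intros)

lemma tendsto_dq_snd [tendsto_intros]: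
  "(f \<longlongrightarrow> x) F \<Longrightarrow> (g \<longlongrightarrow> y) F \<Longrightarrow>
    ((\<lambda>s. dq_snd a m n u (f s) (g s)) \<longlongrightarrow> dq_snd a m n u x y) F"
  unfolding dq_snd_def by (intro tendsto_intros)

text \<open>\<open>(cis s - 1) / s\<close> tends to \<open>\<i>\<close>, while dividing the nonnegative
  \<open>(cis s - 1) * f s\<close> by \<open>s\<close> gives opposite signs on the two sides of 0;
  so \<open>\<i> * f 0\<close> is both \<open>\<ge> 0\<close> and \<open>\<le> 0\<close>.\<close>

lemma nonneg_cis_factor_vanishes:
  fixes f :: "real \<Rightarrow> complex"
  assumes cont: "isCont f 0"
    and nonneg: "\<And>s. Im ((cis s - 1) * f s) = 0 \<and> 0 \<le> Re ((cis s - 1) * f s)"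
  shows "f 0 = 0"
proof -
  have sin_lim: "((\<lambda>s. sin s / s) \<longlongrightarrow> 1) (at (0::real))"
    using DERIV_sin[of 0] unfolding has_field_derivative_iff by simp
  have cos_lim: "((\<lambda>s. (cos s - 1) / s) \<longlongrightarrow> 0) (at (0::real))"
    using DERIV_cos[of 0] unfolding has_field_derivative_iff by simp
  define Q where "Q s = Complex ((cos s - 1) / s) (sin s / s) * f s" for s
  have "(Q \<longlongrightarrow> Complex 0 1 * f 0) (at 0)"
    unfolding Q_def by (intro tendsto_intros sin_lim cos_lim) (use cont isCont_def in blast)
  then have lim: "(Q \<longlongrightarrow> \<i> * f 0) (at 0)"
    by (simp add: Complex_eq)
  define W where "W s = (cis s - 1) * f s" for s
  have Q_eq: "Q s = W s / of_real s" if "s \<noteq> 0" for s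
    using that unfolding Q_def W_def by (simp add: complex_eq_iff cis.ctr field_simps)
  have Re_pos: "0 \<le> Re (Q s)" if "s > 0" for s
    using that Q_eq[of s] nonneg[of s] unfolding W_def[symmetric] by simp
  have Re_neg: "Re (Q s) \<le> 0" if "s < 0" for s
    using that Q_eq[of s] nonneg[of s] unfolding W_def[symmetric] by (simp add: divide_nonneg_neg)
  have Im_zero: "Im (Q s) = 0" if "s \<noteq> 0" for s
    using that Q_eq[of s] nonneg[of s] unfolding W_def[symmetric] by simp
  have "0 \<le> Re (\<i> * f 0)"
    by (rule tendsto_lowerbound[OF tendsto_Re[OF filterlim_mono[OF lim order_refl at_le]], of "{0<..}"])
      (auto simp: eventually_at_filter Re_pos intro!: always_eventually)
  moreover have "Re (\<i> * f 0) \<le> 0"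
    by (rule tendsto_upperbound[OF tendsto_Re[OF filterlim_mono[OF lim order_refl at_le]], of "{..<0}"])
      (auto simp: eventually_at_filter Re_neg intro!: always_eventually)
  moreover have "((\<lambda>s. Im (Q s)) \<longlongrightarrow> 0) (at 0)"
    by (rule tendsto_eventually) (auto simp: eventually_at_filter Im_zero intro!: always_eventually)
  then have "Im (\<i> * f 0) = 0"
    using tendsto_unique[OF _ tendsto_Im[OF lim]] by simp
  ultimately show ?thesis
    by (simp add: complex_eq_iff)
qed

lemma nonneg_on_circle_factor_vanishes:
  fixes g :: "complex \<Rightarrow> complex"
  assumes "norm t = 1" "isCont g t"
    and nonneg: "\<And>x. norm x = 1 \<Longrightarrow> Im ((x - t) * g x) = 0 \<and> 0 \<le> Re ((x - t) * g x)"
  shows "g t = 0"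
proof -
  have "t * g (t * cis 0) = 0"
  proof (rule nonneg_cis_factor_vanishes[where f = "\<lambda>s. t * g (t * cis s)"])
    have "isCont (\<lambda>s. t * cis s) 0"
      unfolding isCont_def by (auto intro!: tendsto_eq_intros)
    then have "isCont (\<lambda>s. g (t * cis s)) 0"
      using isCont_o2[where f = "\<lambda>s. t * cis s" and a = 0 and g = g] assms(2) by simp
    then show "isCont (\<lambda>s. t * g (t * cis s)) 0"
      by (intro continuous_intros)
    fix s :: real
    have "(cis s - 1) * (t * g (t * cis s)) = (t * cis s - t) * g (t * cis s)"
      by (simp add: algebra_simps)
    moreover have "norm (t * cis s) = 1"
      using assms(1) by (simp add: norm_mult)
    ultimately show "Im ((cis s - 1) * (t * g (t * cis s))) = 0 \<and>
        0 \<le> Re ((cis s - 1) * (t * g (t * cis s)))"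
      using nonneg[of "t * cis s"] by (simp only:)
  qed
  then show ?thesis
    using assms(1) by auto
qed

lemma affine_nonzero_on_disk:
  assumes "\<And>w. norm w < 1 \<Longrightarrow> a + w * b \<noteq> (0::complex)"
  shows "a \<noteq> 0" and "norm b \<le> norm a"
proof -
  show "a \<noteq> 0"
    using assms[of 0] by simp
  show "norm b \<le> norm a"
  proof (rule ccontr)
    assume "\<not> norm b \<le> norm a"
    then have "b \<noteq> 0" and "norm (- a / b) < 1"
      by (auto simp: norm_divide divide_less_eq)
    then show False
      using assms[of "- a / b"] by simp
  qed
qed

lemma affine_quotient_diff:
  fixes a b c d w :: complex
  assumes "a \<noteq> 0" "a + w * b \<noteq> 0"
  shows "(w * c + d) / (a + w * b) - d / a = w * (c * a - d * b) / (a * (a + w * b))"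
  using assms by (simp add: field_simps)

locale affine_zero_free =
  fixes a0 a1 :: "nat \<Rightarrow> nat \<Rightarrow> complex" and m n :: nat
  assumes zero_free: "\<And>x y w. norm x < 1 \<Longrightarrow> norm y < 1 \<Longrightarrow> norm w < 1 \<Longrightarrow>
      polyval2 a0 m n x y + w * polyval2 a1 m n x y \<noteq> 0"
begin

abbreviation "p1 \<equiv> polyval2 a0 m n"
abbreviation "p2 \<equiv> polyval2 a1 m n"
abbreviation "pt1 \<equiv> polyval2 (refl2 a0 m n) m n"
abbreviation "pt2 \<equiv> polyval2 (refl2 a1 m n) m n"

lemma p1_nonzero_bidisk: "norm x < 1 \<Longrightarrow> norm y < 1 \<Longrightarrow> p1 x y \<noteq> 0"
  using affine_nonzero_on_disk(1) zero_free by blast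

lemma p2_le_p1_bidisk: "norm x < 1 \<Longrightarrow> norm y < 1 \<Longrightarrow> norm (p2 x y) \<le> norm (p1 x y)"
  using affine_nonzero_on_disk(2) zero_free by blast

lemma p2_le_p1_torus:
  assumes "norm x = 1" "norm y = 1"
  shows "norm (p2 x y) \<le> norm (p1 x y)"
proof (rule tendsto_le[of "at_left (1::real)"])
  have "((\<lambda>r::real. of_real r * x) \<longlongrightarrow> x) (at_left 1)"
    and "((\<lambda>r::real. of_real r * y) \<longlongrightarrow> y) (at_left 1)"
    by (auto intro!: tendsto_eq_intros)
  then show "((\<lambda>r. norm (p1 (of_real r * x) (of_real r * y))) \<longlongrightarrow> norm (p1 x y)) (at_left 1)"
    and "((\<lambda>r. norm (p2 (of_real r * x) (of_real r * y))) \<longlongrightarrow> norm (p2 x y)) (at_left 1)"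
    by (auto intro!: tendsto_intros)
  have "eventually (\<lambda>r. r \<in> {0<..<1}) (at_left (1::real))"
    by (rule eventually_at_left_real) simp
  then show "eventually (\<lambda>r. norm (p2 (of_real r * x) (of_real r * y))
      \<le> norm (p1 (of_real r * x) (of_real r * y))) (at_left 1)"
    by eventually_elim (use assms in \<open>auto intro!: p2_le_p1_bidisk simp: norm_mult\<close>)
qed simp

lemma affine_lower_bound:
  assumes "norm x < 1" "norm y < 1"
  shows "(1 - norm w) * norm (p1 x y) \<le> norm (p1 x y + w * p2 x y)"
proof -
  have "(1 - norm w) * norm (p1 x y) \<le> norm (p1 x y) - norm (w * p2 x y)"
    using mult_left_mono[OF p2_le_p1_bidisk[OF assms] norm_ge_zero[of w]]
    by (simp add: norm_mult algebra_simps)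
  also have "\<dots> \<le> norm (p1 x y + w * p2 x y)"
    by (rule norm_diff_ineq)
  finally show ?thesis .
qed

definition defect :: "complex \<Rightarrow> complex \<Rightarrow> complex"
  where "defect x y = pt1 x y * p1 x y - pt2 x y * p2 x y"

lemma defect_on_torus:
  assumes "norm x = 1" "norm y = 1"
  shows "defect x y * cnj (x ^ m * y ^ n) = of_real ((norm (p1 x y))\<^sup>2 - (norm (p2 x y))\<^sup>2)"
proof -
  define u where "u = x ^ m * y ^ n"
  have "u * cnj u = 1"
    using assms complex_norm_square[of u] by (simp add: u_def norm_mult norm_power)
  moreover have "defect x y * cnj u = (u * cnj u) * (p1 x y * cnj (p1 x y) - p2 x y * cnj (p2 x y))"
    unfolding defect_def polyval2_refl2_on_torus[OF assms] u_def[symmetric]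
    by (simp add: algebra_simps)
  ultimately have "defect x y * cnj u = p1 x y * cnj (p1 x y) - p2 x y * cnj (p2 x y)"
    by simp
  also have "\<dots> = of_real ((norm (p1 x y))\<^sup>2 - (norm (p2 x y))\<^sup>2)"
    by (simp only: of_real_diff complex_norm_square)
  finally show ?thesis
    by (simp add: u_def)
qed

lemma defect_on_torus_nonneg:
  assumes "norm x = 1" "norm y = 1"
  shows "Im (defect x y * cnj (x ^ m * y ^ n)) = 0 \<and> 0 \<le> Re (defect x y * cnj (x ^ m * y ^ n))"
  using p2_le_p1_torus[OF assms] unfolding defect_on_torus[OF assms]
  by (simp add: power_mono)

definition defect_dq_fst :: "complex \<Rightarrow> complex \<Rightarrow> complex \<Rightarrow> complex"
  where "defect_dq_fst t x y =
    dq_fst (refl2 a0 m n) m n t x y * p1 x y + pt1 t y * dq_fst a0 m n t x y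
    - dq_fst (refl2 a1 m n) m n t x y * p2 x y - pt2 t y * dq_fst a1 m n t x y"

definition defect_dq_snd :: "complex \<Rightarrow> complex \<Rightarrow> complex \<Rightarrow> complex"
  where "defect_dq_snd t u y =
    dq_snd (refl2 a0 m n) m n u t y * p1 t y + pt1 t u * dq_snd a0 m n u t y
    - dq_snd (refl2 a1 m n) m n u t y * p2 t y - pt2 t u * dq_snd a1 m n u t y"

lemma defect_diff_fst: "defect x y - defect t y = (x - t) * defect_dq_fst t x y"
proof -
  have "defect x y - defect t y =
      (pt1 x y - pt1 t y) * p1 x y + pt1 t y * (p1 x y - p1 t y)
      - (pt2 x y - pt2 t y) * p2 x y - pt2 t y * (p2 x y - p2 t y)"
    by (simp add: defect_def algebra_simps)
  then show ?thesis
    by (simp only: polyval2_diff_fst) (simp add: defect_dq_fst_def algebra_simps)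
qed

lemma defect_diff_snd: "defect t y - defect t u = (y - u) * defect_dq_snd t u y"
proof -
  have "defect t y - defect t u =
      (pt1 t y - pt1 t u) * p1 t y + pt1 t u * (p1 t y - p1 t u)
      - (pt2 t y - pt2 t u) * p2 t y - pt2 t u * (p2 t y - p2 t u)"
    by (simp add: defect_def algebra_simps)
  then show ?thesis
    by (simp only: polyval2_diff_snd) (simp add: defect_dq_snd_def algebra_simps)
qed

context
  fixes t u :: complex
  assumes t: "norm t = 1" and u: "norm u = 1" and eq_norm: "norm (p1 t u) = norm (p2 t u)"
begin

lemma defect_vanishes: "defect t u = 0"
proof -
  have "defect t u * cnj (t ^ m * u ^ n) = 0"
    using defect_on_torus[OF t u] eq_norm by simp
  moreover have "t \<noteq> 0" "u \<noteq> 0"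
    using t u by auto
  ultimately show ?thesis
    by simp
qed

lemma defect_dq_fst_vanishes: "defect_dq_fst t t u = 0"
proof -
  have "defect_dq_fst t t u * cnj (t ^ m * u ^ n) = 0"
  proof (rule nonneg_on_circle_factor_vanishes[OF t, where g = "\<lambda>x. defect_dq_fst t x u * cnj (x ^ m * u ^ n)"])
    show "isCont (\<lambda>x. defect_dq_fst t x u * cnj (x ^ m * u ^ n)) t"
      unfolding isCont_def defect_dq_fst_def by (intro tendsto_intros)
    fix x :: complex
    assume "norm x = 1"
    have "(x - t) * (defect_dq_fst t x u * cnj (x ^ m * u ^ n)) = defect x u * cnj (x ^ m * u ^ n)"
      using defect_diff_fst[of x u t] defect_vanishes by simp
    then show "Im ((x - t) * (defect_dq_fst t x u * cnj (x ^ m * u ^ n))) = 0 \<and>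
        0 \<le> Re ((x - t) * (defect_dq_fst t x u * cnj (x ^ m * u ^ n)))"
      using defect_on_torus_nonneg[OF \<open>norm x = 1\<close> u] by (simp only:)
  qed
  moreover have "t \<noteq> 0" "u \<noteq> 0"
    using t u by auto
  ultimately show ?thesis
    by simp
qed

lemma defect_dq_snd_vanishes: "defect_dq_snd t u u = 0"
proof -
  have "defect_dq_snd t u u * cnj (t ^ m * u ^ n) = 0"
  proof (rule nonneg_on_circle_factor_vanishes[OF u, where g = "\<lambda>y. defect_dq_snd t u y * cnj (t ^ m * y ^ n)"])
    show "isCont (\<lambda>y. defect_dq_snd t u y * cnj (t ^ m * y ^ n)) u"
      unfolding isCont_def defect_dq_snd_def by (intro tendsto_intros)
    fix y :: complex
    assume "norm y = 1"
    have "(y - u) * (defect_dq_snd t u y * cnj (t ^ m * y ^ n)) = defect t y * cnj (t ^ m * y ^ n)"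
      using defect_diff_snd[of t y u] defect_vanishes by simp
    then show "Im ((y - u) * (defect_dq_snd t u y * cnj (t ^ m * y ^ n))) = 0 \<and>
        0 \<le> Re ((y - u) * (defect_dq_snd t u y * cnj (t ^ m * y ^ n)))"
      using defect_on_torus_nonneg[OF t \<open>norm y = 1\<close>] by (simp only:)
  qed
  moreover have "t \<noteq> 0" "u \<noteq> 0"
    using t u by auto
  ultimately show ?thesis
    by simp
qed

lemma defect_split: "defect x y = (x - t) * defect_dq_fst t x y + (y - u) * defect_dq_snd t u y"
proof -
  have "defect x y = (defect x y - defect t y) + (defect t y - defect t u)"
    using defect_vanishes by simp
  then show ?thesis
    by (simp only: defect_diff_fst defect_diff_snd)
qed

lemma nontangential_estimate:
  assumes z: "(x, y, w) \<in> D3" and nt: "dmax (x, y, w) (t, u, v) \<le> K * (1 - nmax (x, y, w))"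
  shows "norm ((w * pt1 x y + pt2 x y) / (p1 x y + w * p2 x y) - pt2 x y / p1 x y)
    \<le> K * (norm (defect_dq_fst t x y) + norm (defect_dq_snd t u y)) / (norm (p1 x y))\<^sup>2"
proof -
  define \<delta> where "\<delta> = 1 - nmax (x, y, w)"
  define g where "g = norm (defect_dq_fst t x y) + norm (defect_dq_snd t u y)"
  have nx: "norm x < 1" and ny: "norm y < 1" and nw: "norm w < 1"
    using z by (auto simp: D3_def)
  have \<delta>_pos: "\<delta> > 0" and w_le: "\<delta> \<le> 1 - norm w"
    using nx ny nw by (auto simp: \<delta>_def nmax_def)
  have dx: "norm (x - t) \<le> K * \<delta>" and dy: "norm (y - u) \<le> K * \<delta>"
    using nt by (auto simp: \<delta>_def dmax_def)
  then have "0 \<le> K * \<delta>"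
    using norm_ge_zero order_trans by blast
  then have K: "0 \<le> K"
    using \<delta>_pos by (simp add: zero_le_mult_iff)
  have p1_pos: "0 < norm (p1 x y)"
    using p1_nonzero_bidisk[OF nx ny] by simp
  have "\<delta> * norm (p1 x y) \<le> (1 - norm w) * norm (p1 x y)"
    by (rule mult_right_mono[OF w_le norm_ge_zero])
  also have "\<dots> \<le> norm (p1 x y + w * p2 x y)"
    by (rule affine_lower_bound[OF nx ny])
  finally have lower: "\<delta> * norm (p1 x y) \<le> norm (p1 x y + w * p2 x y)" .
  have "norm (w * defect x y) \<le> norm (defect x y)"
    using nw by (simp add: norm_mult mult_left_le_one_le)
  also have "\<dots> \<le> norm (x - t) * norm (defect_dq_fst t x y) + norm (y - u) * norm (defect_dq_snd t u y)"
    unfolding defect_split by (metis norm_mult norm_triangle_ineq)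
  also have "\<dots> \<le> K * \<delta> * norm (defect_dq_fst t x y) + K * \<delta> * norm (defect_dq_snd t u y)"
    by (intro add_mono mult_right_mono dx dy norm_ge_zero)
  also have "\<dots> = K * \<delta> * g"
    by (simp add: g_def algebra_simps)
  finally have defect_le: "norm (w * defect x y) \<le> K * \<delta> * g" .
  have P_nonzero: "p1 x y + w * p2 x y \<noteq> 0"
    using lower mult_pos_pos[OF \<delta>_pos p1_pos] by auto
  have "norm ((w * pt1 x y + pt2 x y) / (p1 x y + w * p2 x y) - pt2 x y / p1 x y)
      = norm (w * defect x y) / norm (p1 x y * (p1 x y + w * p2 x y))"
    unfolding affine_quotient_diff[OF p1_nonzero_bidisk[OF nx ny] P_nonzero] defect_def norm_divide ..
  also have "\<dots> \<le> K * \<delta> * g / (norm (p1 x y) * (\<delta> * norm (p1 x y)))"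
    using defect_le K \<delta>_pos p1_pos lower
    by (intro frac_le) (auto simp: g_def norm_mult mult_left_mono)
  also have "\<dots> = K * g / (norm (p1 x y))\<^sup>2"
    using \<delta>_pos by (simp add: power2_eq_square)
  finally show ?thesis
    unfolding g_def .
qed

end

theorem has_nt_limit_at_torus_zero:
  assumes t: "norm t = 1" and u: "norm u = 1" and v: "norm v = 1"
    and zero: "p1 t u + v * p2 t u = 0" and p1_nonzero: "p1 t u \<noteq> 0"
  shows "has_nt_limit (\<lambda>(x, y, w). (w * pt1 x y + pt2 x y) / (p1 x y + w * p2 x y))
    (t, u, v) (pt2 t u / p1 t u)"
  unfolding has_nt_limit_def
proof (intro allI impI)
  fix K :: real
  define f where "f = (\<lambda>(x, y, w). (w * pt1 x y + pt2 x y) / (p1 x y + w * p2 x y))"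
  define S where "S = {z \<in> D3. dmax z (t, u, v) \<le> K * (1 - nmax z)}"
  define q where "q z = pt2 (fst z) (fst (snd z)) / p1 (fst z) (fst (snd z))" for z :: c3
  define E where "E z = K * (norm (defect_dq_fst t (fst z) (fst (snd z)))
    + norm (defect_dq_snd t u (fst (snd z)))) / (norm (p1 (fst z) (fst (snd z))))\<^sup>2" for z :: c3
  let ?F = "at (t, u, v) within S"
  have eq_norm: "norm (p1 t u) = norm (p2 t u)"
    using zero v by (simp add: add_eq_0_iff2 norm_mult)
  have lim_x: "(fst \<longlongrightarrow> t) ?F" and lim_y: "((\<lambda>z. fst (snd z)) \<longlongrightarrow> u) ?F"
    by (auto intro!: tendsto_eq_intros)
  have "(E \<longlongrightarrow> K * (norm (defect_dq_fst t t u) + norm (defect_dq_snd t u u)) / (norm (p1 t u))\<^sup>2) ?F"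
    unfolding E_def defect_dq_fst_def defect_dq_snd_def
    using p1_nonzero by (intro tendsto_intros lim_x lim_y) auto
  then have E_lim: "(E \<longlongrightarrow> 0) ?F"
    by (simp add: defect_dq_fst_vanishes[OF t u eq_norm] defect_dq_snd_vanishes[OF t u eq_norm])
  have "eventually (\<lambda>z. z \<in> S) ?F"
    by (simp add: eventually_at_filter)
  then have bound: "eventually (\<lambda>z. norm (f z - q z) \<le> E z) ?F"
  proof (rule eventually_mono)
    fix z assume "z \<in> S"
    then obtain x y w where z: "z = (x, y, w)"
      and "(x, y, w) \<in> D3" "dmax (x, y, w) (t, u, v) \<le> K * (1 - nmax (x, y, w))"
      by (cases z) (auto simp: S_def)
    then have "norm ((w * pt1 x y + pt2 x y) / (p1 x y + w * p2 x y) - pt2 x y / p1 x y)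
        \<le> K * (norm (defect_dq_fst t x y) + norm (defect_dq_snd t u y)) / (norm (p1 x y))\<^sup>2"
      by (intro nontangential_estimate[OF t u eq_norm])
    then show "norm (f z - q z) \<le> E z"
      by (simp only: z f_def q_def E_def prod.case fst_conv snd_conv)
  qed
  have "((\<lambda>z. f z - q z) \<longlongrightarrow> 0) ?F"
    by (rule Lim_null_comparison[OF bound E_lim])
  moreover have "(q \<longlongrightarrow> pt2 t u / p1 t u) ?F"
    unfolding q_def using p1_nonzero by (intro tendsto_intros lim_x lim_y)
  ultimately have "((\<lambda>z. (f z - q z) + q z) \<longlongrightarrow> 0 + pt2 t u / p1 t u) ?F"
    by (rule tendsto_add)
  then show "((\<lambda>(x, y, w). (w * pt1 x y + pt2 x y) / (p1 x y + w * p2 x y)) \<longlongrightarrow> pt2 t u / p1 t u)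
      (at (t, u, v) within {z \<in> D3. dmax z (t, u, v) \<le> K * (1 - nmax z)})"
    by (simp add: f_def S_def)
qed

end

theorem lemma4p5:
  fixes c :: "nat \<Rightarrow> nat \<Rightarrow> nat \<Rightarrow> complex" and m n :: nat
    and \<tau>1 \<tau>2 \<tau>3 :: complex
  defines "p \<equiv> polyval3 c m n 1"
      and "pt \<equiv> polyval3 (refl3 c m n 1) m n 1"
      and "p1 \<equiv> polyval2 (\<lambda>i j. c i j 0) m n"
      and "p2 \<equiv> polyval2 (\<lambda>i j. c i j 1) m n"
      and "pt2 \<equiv> polyval2 (refl2 (\<lambda>i j. c i j 1) m n) m n"
  assumes deg1: "\<exists>j\<le>n. \<exists>k\<le>1. c m j k \<noteq> 0"
      and deg2: "\<exists>i\<le>m. \<exists>k\<le>1. c i n k \<noteq> 0"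
      and deg3: "\<exists>i\<le>m. \<exists>j\<le>n. c i j 1 \<noteq> 0"
      and zero_free: "\<forall>z\<in>D3. p z \<noteq> 0"
      and coprime: "no_common_factor3 p pt"
      and inner: "radial_unimodular_ae (\<lambda>z. pt z / p z)"
      and irred: "irreducible3 p"
      and tau: "(\<tau>1, \<tau>2, \<tau>3) \<in> T3" "p (\<tau>1, \<tau>2, \<tau>3) = 0"
      and not_line: "\<not> (\<forall>\<zeta>. norm \<zeta> = 1 \<longrightarrow> p (\<tau>1, \<tau>2, \<zeta>) = 0)"
  shows "has_nt_limit (\<lambda>z. pt z / p z) (\<tau>1, \<tau>2, \<tau>3) (pt2 \<tau>1 \<tau>2 / p1 \<tau>1 \<tau>2)"
proof -
  define pt1 where "pt1 = polyval2 (refl2 (\<lambda>i j. c i j 0) m n) m n"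
  have p_eq: "p (x, y, w) = p1 x y + w * p2 x y" for x y w
    unfolding p_def p1_def p2_def by (rule polyval3_affine_last)
  have pt_eq: "pt (x, y, w) = w * pt1 x y + pt2 x y" for x y w
    unfolding pt_def pt1_def pt2_def by (rule polyval3_refl3_affine_last)
  have "affine_zero_free (\<lambda>i j. c i j 0) (\<lambda>i j. c i j 1) m n"
    by unfold_locales (use zero_free in \<open>auto simp: D3_def p_eq p1_def p2_def\<close>)
  note nt_limit = affine_zero_free.has_nt_limit_at_torus_zero[OF this,
      folded p1_def p2_def pt1_def pt2_def]
  have norms: "norm \<tau>1 = 1" "norm \<tau>2 = 1" "norm \<tau>3 = 1"
    using tau(1) by (auto simp: T3_def)
  have zero: "p1 \<tau>1 \<tau>2 + \<tau>3 * p2 \<tau>1 \<tau>2 = 0"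
    using tau(2) by (simp add: p_eq)
  have "p1 \<tau>1 \<tau>2 \<noteq> 0"
  proof
    assume "p1 \<tau>1 \<tau>2 = 0"
    moreover from this have "p2 \<tau>1 \<tau>2 = 0"
      using zero norms(3) by auto
    ultimately show False
      using not_line by (simp add: p_eq)
  qed
  moreover have "(\<lambda>z. pt z / p z) = (\<lambda>(x, y, w). (w * pt1 x y + pt2 x y) / (p1 x y + w * p2 x y))"
    by (auto simp: p_eq pt_eq)
  ultimately show ?thesis
    using nt_limit[OF norms zero] by simp
qed

end
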